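(* Let $a_2,a_3$ be integers with $1<a_2<a_3$, $A=\{1,a_2,a_3\}$, and write $a_3=C_2a_2+C_1$ with $0\le C_1<a_2$. If $a_2-C_2\le C_1<a_2$, or if $C_1=0$, then the fundamental stride generator for $A$ is of order $0$.
   Context: For integers $n$ and $i\ge 0$, an integer $x$ has an $n$-generation of order $i$ if there are integers $c_1,c_2\ge 0$ with $x+ia_3=c_2a_2+c_1$ and $c_1+c_2\le n+i$. For integers $n$ and $p\ge0$, $SG(A,n,p)$ is a stride generator (of order $p$) if: (A) every integer $0\le x<a_3$ has an $n$-generation of some order $\le p$; (B) at least one integer $0\le x<a_3$ has no $n$-generation of order $<p$; (C) at least one integer $0\le y<a_3$ has no $(n-1)$-generation of any order $\le p+1$. A stride generator $SG(A,n,p)$ is the fundamental stride generator for $A$ if there is no stride generator $SG(A,n',p')$ with $n'>n$. *)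

theory Defs
  imports Main
begin

text \<open>The set A = {1, a2, a3} is represented by the pair of integers a2, a3.\<close>

definition has_gen :: "int \<Rightarrow> int \<Rightarrow> int \<Rightarrow> nat \<Rightarrow> int \<Rightarrow> bool" where
  "has_gen a2 a3 n i x \<longleftrightarrow>
     (\<exists>c1 c2::int. c1 \<ge> 0 \<and> c2 \<ge> 0 \<and> x + int i * a3 = c2 * a2 + c1 \<and> c1 + c2 \<le> n + int i)"

definition stride_gen :: "int \<Rightarrow> int \<Rightarrow> int \<Rightarrow> nat \<Rightarrow> bool" where
  "stride_gen a2 a3 n p \<longleftrightarrow>
     (\<forall>x. 0 \<le> x \<and> x < a3 \<longrightarrow> (\<exists>i\<le>p. has_gen a2 a3 n i x)) \<and>
     (\<exists>x. 0 \<le> x \<and> x < a3 \<and> (\<forall>i<p. \<not> has_gen a2 a3 n i x)) \<and>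
     (\<exists>y. 0 \<le> y \<and> y < a3 \<and> (\<forall>i\<le>p + 1. \<not> has_gen a2 a3 (n - 1) i y))"

definition fundamental_stride_gen :: "int \<Rightarrow> int \<Rightarrow> int \<Rightarrow> nat \<Rightarrow> bool" where
  "fundamental_stride_gen a2 a3 n p \<longleftrightarrow>
     stride_gen a2 a3 n p \<and> \<not> (\<exists>n' p'. n' > n \<and> stride_gen a2 a3 n' p')"

end

theory Submission
  imports Defs
begin

text \<open>Writing y = c2 * a2 + c1 greedily (c2 = y div a2, c1 = y mod a2) minimises c1 + c2, so x
  has an n-generation of order i exactly when the base-a2 digit sum of y = x + i * a3 is at most
  n + i. Put M = C2 + a2 - 2. Every 0 <= x < a3 has digit sum at most M, while C2 * a2 - 1 has
  digit sum exactly M and, by the hypothesis on C1, adding a3 raises its digit sum above M; hence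
  SG(A, M, 0) is a stride generator. The fundamental one then has n >= M, so every x already has
  an n-generation of order 0, which rules out any order p > 0.\<close>

lemma div_add_mod_le_coeff_sum:
  fixes a c1 c2 :: int
  assumes "0 < a" "0 \<le> c1" "0 \<le> c2"
  shows "(c2 * a + c1) div a + (c2 * a + c1) mod a \<le> c1 + c2"
proof -
  have "(c2 * a + c1) div a = c2 + c1 div a" "(c2 * a + c1) mod a = c1 mod a"
    using assms(1) by simp_all
  moreover have "0 \<le> c1 div a" using assms by (simp add: pos_imp_zdiv_nonneg_iff)
  then have "c1 div a \<le> c1 div a * a" using assms(1) by (simp add: mult_le_cancel_left1)
  moreover have "c1 = c1 div a * a + c1 mod a" by simp
  ultimately show ?thesis by linarith
qed

lemma div_add_mod_of_digits:
  fixes a q r :: int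
  assumes "0 \<le> r" "r < a"
  shows "(q * a + r) div a + (q * a + r) mod a = q + r"
  using assms by (simp add: div_pos_pos_trivial mod_pos_pos_trivial)

lemma has_gen_iff_digit_sum:
  assumes "0 < a2"
  shows "has_gen a2 a3 n i x \<longleftrightarrow>
    0 \<le> x + int i * a3 \<and> (x + int i * a3) div a2 + (x + int i * a3) mod a2 \<le> n + int i"
    (is "_ \<longleftrightarrow> 0 \<le> ?y \<and> _")
proof
  assume "has_gen a2 a3 n i x"
  then obtain c1 c2 where "0 \<le> c1" "0 \<le> c2" "?y = c2 * a2 + c1" "c1 + c2 \<le> n + int i"
    unfolding has_gen_def by blast
  with div_add_mod_le_coeff_sum[OF assms, of c1 c2] show "0 \<le> ?y \<and> ?y div a2 + ?y mod a2 \<le> n + int i"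
    using assms by (simp add: add_nonneg_nonneg)
next
  assume "0 \<le> ?y \<and> ?y div a2 + ?y mod a2 \<le> n + int i"
  then show "has_gen a2 a3 n i x"
    unfolding has_gen_def using assms
    by (intro exI[of _ "?y mod a2"] exI[of _ "?y div a2"]) (simp add: pos_imp_zdiv_nonneg_iff)
qed

lemma has_gen_mono: "n \<le> n' \<Longrightarrow> has_gen a2 a3 n i x \<Longrightarrow> has_gen a2 a3 n' i x"
  unfolding has_gen_def by force

lemma div_add_mod_le_of_less:
  fixes a x b :: int
  assumes "0 < a" "0 \<le> x" "x < b"
  shows "x div a + x mod a \<le> b div a + a - 2"
proof -
  have "x div a \<le> b div a" using assms by (simp add: zdiv_mono1)
  moreover have "x mod a < b mod a" if "x div a = b div a"
  proof -
    have "x div a * a + x mod a < b div a * a + b mod a" using assms(3) by simp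
    with that show ?thesis by (simp only: add_less_cancel_left)
  qed
  moreover have "x mod a < a" "b mod a < a" using assms(1) by simp_all
  ultimately show ?thesis by linarith
qed

lemma stride_gen_order_zero:
  fixes a2 a3 :: int
  assumes "1 < a2" "a2 < a3" and "a2 \<le> a3 div a2 + a3 mod a2 \<or> a3 mod a2 = 0"
  shows "stride_gen a2 a3 (a3 div a2 + a2 - 2) 0"
proof -
  define C2 C1 M where "C2 = a3 div a2" and "C1 = a3 mod a2" and "M = a3 div a2 + a2 - 2"
  have a3: "a3 = C2 * a2 + C1" and C1: "0 \<le> C1" "C1 < a2"
    using assms(1) unfolding C2_def C1_def by simp_all
  have "a2 div a2 \<le> C2" unfolding C2_def using assms(1,2) by (intro zdiv_mono1) simp_all
  then have "1 \<le> C2" using assms(1) by simp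
  have gen: "has_gen a2 a3 M 0 x" if "0 \<le> x" "x < a3" for x
    using assms(1) that div_add_mod_le_of_less[of a2 x a3] by (simp add: has_gen_iff_digit_sum M_def)
  define x0 where "x0 = (C2 - 1) * a2 + (a2 - 1)"
  have "0 \<le> (C2 - 1) * a2" using \<open>1 \<le> C2\<close> assms(1) by simp
  moreover have "x0 = C2 * a2 - 1" unfolding x0_def by (simp add: algebra_simps)
  ultimately have x0: "0 \<le> x0" "x0 < a3"
    using assms(1) a3 C1 unfolding x0_def by linarith+
  have "\<not> has_gen a2 a3 (M - 1) 0 x0"
    using assms(1) div_add_mod_of_digits[of "a2 - 1" a2 "C2 - 1"]
    by (simp add: has_gen_iff_digit_sum x0_def M_def C2_def)
  moreover have "\<not> has_gen a2 a3 (M - 1) 1 x0"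
  proof (cases "C1 = 0")
    case True
    then have "x0 + a3 = (2 * C2 - 1) * a2 + (a2 - 1)" unfolding x0_def a3 by (simp add: algebra_simps)
    with assms(1) \<open>1 \<le> C2\<close> div_add_mod_of_digits[of "a2 - 1" a2 "2 * C2 - 1"] show ?thesis
      by (simp add: has_gen_iff_digit_sum M_def C2_def)
  next
    case False
    then have "x0 + a3 = 2 * C2 * a2 + (C1 - 1)" unfolding x0_def a3 by (simp add: algebra_simps)
    with assms(1,3) C1 False div_add_mod_of_digits[of "C1 - 1" a2 "2 * C2"] show ?thesis
      by (simp add: has_gen_iff_digit_sum M_def C2_def C1_def)
  qed
  ultimately have "\<forall>i\<le>0 + 1. \<not> has_gen a2 a3 (M - 1) i x0"
    by (simp add: le_Suc_eq)
  with gen x0 assms(2) show ?thesis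
    unfolding stride_gen_def M_def[symmetric] by auto
qed

lemma fundamental_stride_gen_order_zero:
  assumes "stride_gen a2 a3 m 0" and "fundamental_stride_gen a2 a3 n p"
  shows "p = 0"
proof (rule ccontr)
  assume "p \<noteq> 0"
  have "m \<le> n" using assms unfolding fundamental_stride_gen_def by (meson not_le)
  from assms(2) obtain x where "0 \<le> x" "x < a3" "\<forall>i<p. \<not> has_gen a2 a3 n i x"
    unfolding fundamental_stride_gen_def stride_gen_def by blast
  moreover have "has_gen a2 a3 m 0 x"
    using assms(1) \<open>0 \<le> x\<close> \<open>x < a3\<close> unfolding stride_gen_def by auto
  ultimately show False using \<open>p \<noteq> 0\<close> has_gen_mono[OF \<open>m \<le> n\<close>] by blast
qed

theorem lemma15:
  fixes a2 a3 n :: int and p :: nat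
  assumes "1 < a2" and "a2 < a3"
    and "(a2 - a3 div a2 \<le> a3 mod a2 \<and> a3 mod a2 < a2) \<or> a3 mod a2 = 0"
    and "fundamental_stride_gen a2 a3 n p"
  shows "p = 0"
proof -
  have "a2 \<le> a3 div a2 + a3 mod a2 \<or> a3 mod a2 = 0" using assms(3) by linarith
  with assms(1,2) have "stride_gen a2 a3 (a3 div a2 + a2 - 2) 0" by (rule stride_gen_order_zero)
  then show ?thesis using assms(4) by (rule fundamental_stride_gen_order_zero)
qed

end
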